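(* Let $\mathfrak X=(\mathbb R^d,d_{\rm e},\mu)$, $d\in\mathbb N$, where $d_{\rm e}$ is the Euclidean metric and $\mu$ is a Borel measure with $\mu(B)\in(0,\infty)$ for every open ball $B$. Assume that $\limsup_{r\to\infty}\frac{\mu(B_{r+1}(y_0))}{\mu(B_r(y_0))}<\infty$ for some $y_0\in\mathbb R^d$. Then the centered maximal operator $\mathcal M^{\rm c}_{\mathfrak X}$ possesses the dichotomy property.
   Context: $B_r(x)$ is the open Euclidean ball of center $x$ and radius $r$. $L^1_{\rm loc}(\mu)$: functions integrable on every open ball. $\mathcal M^{\rm c}f(x)=\sup_{r>0}\mu(B_r(x))^{-1}\int_{B_r(x)}|f|d\mu$. $\mathcal M^{\rm c}$ possesses the dichotomy property if for every $f\in L^1_{\rm loc}(\mu)$ either $\mu(\{\mathcal M^{\rm c}f=\infty\})=0$ or $\mathcal M^{\rm c}f(x)=\infty$ for all $x$. *)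

theory Defs
  imports "HOL-Analysis.Analysis"
begin

definition L1_loc :: "'a::metric_space measure \<Rightarrow> ('a \<Rightarrow> real) set" where
  "L1_loc M = {f. f \<in> borel_measurable M \<and>
      (\<forall>x r. (\<integral>\<^sup>+ y\<in>ball x r. ennreal \<bar>f y\<bar> \<partial>M) < \<infinity>)}"

definition centered_max :: "'a::metric_space measure \<Rightarrow> ('a \<Rightarrow> real) \<Rightarrow> 'a \<Rightarrow> ennreal" where
  "centered_max M f x =
     (SUP r\<in>{0<..}. (\<integral>\<^sup>+ y\<in>ball x r. ennreal \<bar>f y\<bar> \<partial>M) / emeasure M (ball x r))"

definition dichotomy_centered :: "'a::metric_space measure \<Rightarrow> bool" where
  "dichotomy_centered M \<longleftrightarrow>
     (\<forall>f\<in>L1_loc M. emeasure M {x. centered_max M f x = \<infinity>} = 0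
                    \<or> (\<forall>x. centered_max M f x = \<infinity>))"

end

theory Submission
  imports Defs
begin

text \<open>
  Let \<open>\<nu>\<close> be the measure with density \<open>\<bar>f\<bar>\<close>, so that \<open>\<M>\<^sup>c f x\<close> is the supremum over \<open>r > 0\<close>
  of \<open>\<nu>(B\<^sub>r(x)) / \<mu>(B\<^sub>r(x))\<close>. If this is finite at one point \<open>x\<^sub>0\<close>, the growth condition makes
  \<open>\<mu>\<close>-balls around any \<open>x\<close> comparable with \<open>\<mu>\<close>-balls around \<open>x\<^sub>0\<close> at large radii, so at every \<open>x\<close>
  the ratios for \<open>r \<ge> 1\<close> are bounded. Where the maximal function is infinite, the ratios are
  therefore unbounded along radii \<open>r < 1\<close>, and these points form a \<open>\<mu>\<close>-null set. For the latter,
  left continuity of \<open>r \<mapsto> \<nu>(B\<^sub>r(x))\<close> allows restricting the radii to the finite grids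
  \<open>{k/(m+1)}\<close>; for finitely many radii a Besicovitch-type selection gives covers by balls whose
  centres lie outside each other's balls, and the overlap of such a family is bounded by a
  dimensional constant, since two of its centres seen from a common point of their balls are more
  than \<open>60\<degree>\<close> apart.
\<close>

section \<open>Families of balls with isolated centres\<close>

definition isolated_centers :: "('a::metric_space \<Rightarrow> real) \<Rightarrow> 'a set \<Rightarrow> bool" where
  "isolated_centers \<rho> S \<longleftrightarrow> (\<forall>x\<in>S. \<forall>y\<in>S. x \<noteq> y \<longrightarrow> \<rho> x \<le> dist x y)"

lemma card_le_card_of_separated_ball_cover:
  fixes P :: "'a::metric_space set"
  assumes "finite T" and cover: "P \<subseteq> (\<Union>t\<in>T. ball t e)"
    and sep: "\<And>x y. x \<in> P \<Longrightarrow> y \<in> P \<Longrightarrow> x \<noteq> y \<Longrightarrow> 2 * e \<le> dist x y"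
  shows "card P \<le> card T"
proof -
  obtain g where g: "\<And>x. x \<in> P \<Longrightarrow> g x \<in> T \<and> dist (g x) x < e"
    using cover by (simp add: subset_iff) metis
  have "inj_on g P"
  proof (rule inj_onI, rule ccontr)
    fix x y assume xy: "x \<in> P" "y \<in> P" "g x = g y" "x \<noteq> y"
    then have "dist x y < 2 * e"
      using g[of x] g[of y] dist_triangle[of x y "g x"] by (simp add: dist_commute)
    with sep xy show False by fastforce
  qed
  then show ?thesis
    using card_inj_on_le[of g P T] g \<open>finite T\<close> by blast
qed

lemma isolated_centers_card_bounded:
  fixes A :: "'a::heine_borel set"
  assumes "bounded A" "d > 0"
  obtains b :: nat where
    "\<And>P. P \<subseteq> A \<Longrightarrow> isolated_centers (\<lambda>_. d) P \<Longrightarrow> card P \<le> b"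
proof -
  have "compact (closure A)"
    using assms(1) by (simp add: compact_closure)
  then obtain T where T: "finite T" "closure A \<subseteq> (\<Union>t\<in>T. ball t (d/2))"
    using assms(2) unfolding compact_eq_totally_bounded by (metis half_gt_zero)
  have "card P \<le> card T" if "P \<subseteq> A" "isolated_centers (\<lambda>_. d) P" for P
    using that closure_subset[of A] T
    by (intro card_le_card_of_separated_ball_cover[where e="d/2"]) (auto simp: isolated_centers_def)
  then show ?thesis using that by blast
qed

lemma maximal_isolated_centers:
  fixes A :: "'a::heine_borel set"
  assumes "bounded A" "d > 0"
  obtains P where "finite P" "P \<subseteq> A" "isolated_centers (\<lambda>_. d) P" "A \<subseteq> (\<Union>p\<in>P. ball p d)"
proof -
  define Q where "Q P \<longleftrightarrow> finite P \<and> P \<subseteq> A \<and> isolated_centers (\<lambda>_. d) P" for P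
  obtain b where b: "\<And>P. P \<subseteq> A \<Longrightarrow> isolated_centers (\<lambda>_. d) P \<Longrightarrow> card P \<le> b"
    using isolated_centers_card_bounded[OF assms] by auto
  have "Q {}"
    by (simp add: Q_def isolated_centers_def)
  moreover have "\<forall>P. Q P \<longrightarrow> card P < Suc b"
    using b by (simp add: Q_def less_Suc_eq_le)
  ultimately obtain P where P: "Q P" and P_max: "\<And>P'. Q P' \<Longrightarrow> card P' \<le> card P"
    using Lattices_Big.ex_has_greatest_nat[of Q "{}" card "Suc b"] by blast
  have "A \<subseteq> (\<Union>p\<in>P. ball p d)"
  proof (rule subsetI, rule ccontr)
    fix a assume "a \<in> A" and a_far: "a \<notin> (\<Union>p\<in>P. ball p d)"
    then have "a \<notin> P"
      using assms(2) by (metis UN_I centre_in_ball)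
    moreover have "Q (insert a P)"
      using P \<open>a \<in> A\<close> a_far unfolding Q_def isolated_centers_def
      by (auto simp: dist_commute not_less)
    ultimately show False
      using P_max[of "insert a P"] P by (simp add: Q_def)
  qed
  with P show ?thesis
    using that unfolding Q_def by blast
qed

lemma isolated_centers_Un:
  assumes "isolated_centers \<rho> P" "isolated_centers \<rho> S"
    and "\<And>p. p \<in> P \<Longrightarrow> \<rho> p = v" "\<And>x. x \<in> S \<Longrightarrow> \<rho> x \<le> v"
    and "\<And>p x. p \<in> P \<Longrightarrow> x \<in> S \<Longrightarrow> v \<le> dist p x"
  shows "isolated_centers \<rho> (P \<union> S)"
  using assms unfolding isolated_centers_def
  by (metis Un_iff dist_commute order_trans)

lemma finite_radii_isolated_subcover:
  fixes A :: "'a::heine_borel set"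
  assumes "bounded A" "finite (\<rho> ` A)" "\<rho> ` A \<subseteq> {0<..}"
  obtains S where "finite S" "S \<subseteq> A" "A \<subseteq> (\<Union>x\<in>S. ball x (\<rho> x))" "isolated_centers \<rho> S"
  using assms
proof (induction "card (\<rho> ` A)" arbitrary: A thesis rule: less_induct)
  case less
  show ?case
  proof (cases "A = {}")
    case True
    then show ?thesis
      using less.prems(1)[of "{}"] by (simp add: isolated_centers_def)
  next
    case False
    define v where "v = Max (\<rho> ` A)"
    have v: "v \<in> \<rho> ` A" "\<And>x. x \<in> A \<Longrightarrow> \<rho> x \<le> v"
      using False less.prems(3) by (simp_all add: v_def)
    define Av where "Av = {x\<in>A. \<rho> x = v}"
    have "bounded Av" "v > 0"
      using less.prems(2) v(1) less.prems(4) by (auto simp: Av_def intro: bounded_subset)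
    then obtain P where P: "finite P" "P \<subseteq> Av" "isolated_centers (\<lambda>_. v) P"
      and Av_cover: "Av \<subseteq> (\<Union>p\<in>P. ball p v)"
      by (rule maximal_isolated_centers)
    define A' where "A' = A - (\<Union>p\<in>P. ball p v)"
    have "\<rho> ` A' \<subseteq> \<rho> ` A - {v}"
      using Av_cover by (auto simp: A'_def Av_def)
    then have "card (\<rho> ` A') < card (\<rho> ` A)"
      using v(1) by (intro psubset_card_mono less.prems(3)) blast
    moreover have "bounded A'" "finite (\<rho> ` A')" "\<rho> ` A' \<subseteq> {0<..}"
      using less.prems(2-4) \<open>\<rho> ` A' \<subseteq> \<rho> ` A - {v}\<close>
      by (auto simp: A'_def intro: bounded_subset finite_subset)
    ultimately obtain S where S: "finite S" "S \<subseteq> A'" "A' \<subseteq> (\<Union>x\<in>S. ball x (\<rho> x))"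
      "isolated_centers \<rho> S"
      using less.hyps by blast
    have "isolated_centers \<rho> (P \<union> S)"
    proof (rule isolated_centers_Un)
      show "isolated_centers \<rho> P"
        using P(2,3) by (auto simp: isolated_centers_def Av_def)
    qed (use P(2) S(2,4) v(2) in \<open>auto simp: Av_def A'_def not_less\<close>)
    moreover have "A \<subseteq> (\<Union>x\<in>P \<union> S. ball x (\<rho> x))"
    proof -
      have "(\<Union>p\<in>P. ball p v) = (\<Union>p\<in>P. ball p (\<rho> p))"
        using P(2) by (auto simp: Av_def)
      then show ?thesis
        using S(3) by (auto simp: A'_def)
    qed
    ultimately show ?thesis
      using less.prems(1)[of "P \<union> S"] P S by (auto simp: A'_def Av_def)
  qed
qed

lemma dist_sgn_gt_1_if_far:
  fixes a b :: "'a::real_inner"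
  assumes "a \<noteq> 0" "b \<noteq> 0" "norm a < norm (a - b)" "norm b < norm (a - b)"
  shows "1 < dist (sgn a) (sgn b)"
proof -
  have expand: "(norm (a - b))\<^sup>2 = (norm a)\<^sup>2 + (norm b)\<^sup>2 - 2 * inner a b"
    by (simp add: power2_norm_eq_inner inner_diff inner_commute)
  have "(norm a)\<^sup>2 < (norm (a - b))\<^sup>2" "(norm b)\<^sup>2 < (norm (a - b))\<^sup>2"
    using assms(3,4) by (simp_all add: power_strict_mono)
  then have "2 * inner a b < min ((norm a)\<^sup>2) ((norm b)\<^sup>2)"
    using expand by simp
  also have "\<dots> \<le> norm a * norm b"
    by (cases "norm a \<le> norm b")
      (auto simp: min_le_iff_disj power2_eq_square intro: mult_left_mono mult_right_mono)
  finally have "inner (sgn a) (sgn b) < 1/2"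
    using assms(1,2) by (simp add: sgn_div_norm field_simps)
  moreover have "(dist (sgn a) (sgn b))\<^sup>2
      = (norm (sgn a))\<^sup>2 + (norm (sgn b))\<^sup>2 - 2 * inner (sgn a) (sgn b)"
    by (simp add: dist_norm power2_norm_eq_inner inner_diff inner_commute)
  ultimately have "1 < (dist (sgn a) (sgn b))\<^sup>2"
    using assms(1,2) by (simp add: norm_sgn)
  then show ?thesis
    by (smt (verit) zero_le_dist one_power2 power_mono)
qed

lemma isolated_centers_bounded_overlap:
  "\<exists>N::nat. \<forall>(S :: 'a::euclidean_space set) \<rho> z.
     isolated_centers \<rho> S \<longrightarrow> card {x\<in>S. z \<in> ball x (\<rho> x)} \<le> N"
proof -
  obtain T :: "'a set" where T: "finite T" "sphere 0 1 \<subseteq> (\<Union>t\<in>T. ball t (1/2))"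
    using compact_sphere[of "0::'a" 1] unfolding compact_eq_totally_bounded
    by (metis divide_pos_pos zero_less_one zero_less_numeral)
  have "card {x\<in>S. z \<in> ball x (\<rho> x)} \<le> Suc (card T)"
    if "isolated_centers \<rho> S" for S :: "'a set" and \<rho> z
  proof -
    define Q where "Q = {x\<in>S. z \<in> ball x (\<rho> x)} - {z}"
    define u where "u x = sgn (x - z)" for x
    have far: "1 < dist (u x) (u y)" if "x \<in> Q" "y \<in> Q" "x \<noteq> y" for x y
    proof -
      have "norm (x - z) < norm ((x - z) - (y - z))" "norm (y - z) < norm ((x - z) - (y - z))"
        using that \<open>isolated_centers \<rho> S\<close>
        by (fastforce simp: Q_def isolated_centers_def dist_norm norm_minus_commute)+
      then show ?thesis
        using that unfolding u_def by (intro dist_sgn_gt_1_if_far) (auto simp: Q_def)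
    qed
    then have "inj_on u Q"
      by (metis inj_onI dist_self not_one_less_zero)
    have "u ` Q \<subseteq> sphere 0 1"
      by (auto simp: u_def Q_def norm_sgn split: if_splits)
    then have "card (u ` Q) \<le> card T"
      using far T by (intro card_le_card_of_separated_ball_cover[where e="1/2"]) fastforce+
    then have "card Q \<le> card T"
      by (simp add: card_image[OF \<open>inj_on u Q\<close>])
    moreover have "card {x\<in>S. z \<in> ball x (\<rho> x)} \<le> Suc (card Q)"
      unfolding Q_def
      by (cases "finite {x\<in>S. z \<in> ball x (\<rho> x)}") (auto simp: card_Diff_singleton_if)
    ultimately show ?thesis
      by linarith
  qed
  then show ?thesis
    by blast
qed

section \<open>Points whose small balls have unbounded ratio form a null set\<close>

lemma sum_emeasure_le_of_bounded_overlap: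
  assumes "finite S" and sets_B: "\<And>x. x \<in> S \<Longrightarrow> B x \<in> sets M"
    and overlap: "\<And>z. card {x\<in>S. z \<in> B x} \<le> N"
  shows "(\<Sum>x\<in>S. emeasure M (B x)) \<le> of_nat N * emeasure M (\<Union>x\<in>S. B x)"
proof -
  have "(\<Sum>x\<in>S. emeasure M (B x)) = (\<integral>\<^sup>+z. (\<Sum>x\<in>S. indicator (B x) z) \<partial>M)"
    using sets_B by (simp add: nn_integral_sum)
  also have "\<dots> \<le> (\<integral>\<^sup>+z. of_nat N * indicator (\<Union>x\<in>S. B x) z \<partial>M)"
  proof (rule nn_integral_mono)
    fix z
    have "(\<Sum>x\<in>S. indicator (B x) z :: ennreal) = of_nat (card {x\<in>S. z \<in> B x})"
      using \<open>finite S\<close> by (simp add: indicator_def Int_def flip: sum.inter_filter)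
    also have "\<dots> \<le> of_nat N * indicator (\<Union>x\<in>S. B x) z"
    proof (cases "z \<in> (\<Union>x\<in>S. B x)")
      case True
      then show ?thesis
        using overlap[of z] by simp
    next
      case False
      then have "{x\<in>S. z \<in> B x} = {}"
        by blast
      then have "card {x\<in>S. z \<in> B x} = 0"
        by (simp only: card.empty)
      then show ?thesis
        by simp
    qed
    finally show "(\<Sum>x\<in>S. indicator (B x) z :: ennreal) \<le> of_nat N * indicator (\<Union>x\<in>S. B x) z" .
  qed
  also have "\<dots> = of_nat N * emeasure M (\<Union>x\<in>S. B x)"
    using \<open>finite S\<close> sets_B by (simp add: nn_integral_cmult_indicator sets.finite_UN)
  finally show ?thesis .
qed

lemma less_emeasure_ball_imp_less_smaller_ball:
  fixes x :: "'a::metric_space"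
  assumes "sets M = sets borel" "c < emeasure M (ball x r)"
  obtains r' where "0 < r'" "r' < r" "c < emeasure M (ball x r')"
proof -
  define b where "b n = ball x (r - inverse (Suc n))" for n :: nat
  have "incseq b"
    unfolding b_def by (intro incseq_SucI subset_ball diff_left_mono le_imp_inverse_le) auto
  have "(\<Union>n. b n) = ball x r"
  proof (rule antisym)
    show "ball x r \<subseteq> (\<Union>n. b n)"
    proof
      fix y assume "y \<in> ball x r"
      then obtain n where "inverse (Suc n) < r - dist x y"
        using reals_Archimedean[of "r - dist x y"] by auto
      then show "y \<in> (\<Union>n. b n)"
        unfolding b_def by (intro UN_I[of n]) auto
    qed
  next
    show "(\<Union>n. b n) \<subseteq> ball x r"
      unfolding b_def by (intro UN_least subset_ball) simp
  qed
  moreover have "range b \<subseteq> sets M"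
    by (simp add: assms(1) b_def image_subset_iff)
  ultimately have "(SUP n. emeasure M (b n)) = emeasure M (ball x r)"
    using SUP_emeasure_incseq[of b M] \<open>incseq b\<close> by simp
  then have "c < (SUP n. emeasure M (b n))"
    using assms(2) by simp
  then obtain n where n: "c < emeasure M (b n)"
    by (auto simp: less_SUP_iff)
  then have "b n \<noteq> {}"
    by auto
  then have "0 < r - inverse (Suc n)"
    by (simp add: b_def)
  moreover have "r - inverse (Suc n) < r"
    by simp
  ultimately show ?thesis
    using n unfolding b_def by (rule that)
qed

definition radius_grid :: "nat \<Rightarrow> real set" where
  "radius_grid m = (\<lambda>k. real k / real (Suc m)) ` {1..Suc m}"

lemma finite_radius_grid: "finite (radius_grid m)"
  by (simp add: radius_grid_def)

lemma radius_grid_subset: "radius_grid m \<subseteq> {0<..1}"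
  by (auto simp: radius_grid_def)

lemma eventually_radius_grid_between:
  assumes "0 < a" "a < b" "b \<le> 1"
  shows "eventually (\<lambda>m. \<exists>s\<in>radius_grid m. a \<le> s \<and> s \<le> b) sequentially"
proof -
  obtain m0 :: nat where m0: "inverse (Suc m0) < b - a"
    using reals_Archimedean assms(2) by (metis diff_gt_0_iff_gt)
  have "\<exists>s\<in>radius_grid m. a \<le> s \<and> s \<le> b" if "m0 \<le> m" for m
  proof -
    define q where "q = real (Suc m)"
    define k where "k = nat \<lfloor>b * q\<rfloor>"
    have "q > 0"
      by (simp add: q_def)
    have "1 < (b - a) * real (Suc m0)"
      using m0 by (simp add: field_simps)
    also have "\<dots> \<le> (b - a) * q"
      using that assms(2) by (intro mult_left_mono) (auto simp: q_def)
    finally have "a * q + 1 < b * q"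
      by (simp add: algebra_simps)
    moreover have "0 < a * q"
      using assms(1) \<open>q > 0\<close> by simp
    moreover have "b * q - 1 < real k" "real k \<le> b * q"
    proof -
      have "real k = of_int \<lfloor>b * q\<rfloor>"
        using assms \<open>q > 0\<close> by (simp add: k_def)
      then show "b * q - 1 < real k" "real k \<le> b * q"
        by simp_all
    qed
    moreover have "b * q \<le> q"
      using assms(3) \<open>q > 0\<close> by simp
    ultimately have k_bounds: "a * q \<le> real k" "real k \<le> b * q" "0 < real k" "real k \<le> q"
      by linarith+
    then have "k \<in> {1..Suc m}"
      by (simp add: q_def)
    with k_bounds \<open>q > 0\<close> show ?thesis
      unfolding radius_grid_def
      by (intro bexI[of _ "real k / q"]) (auto simp: field_simps q_def)
  qed
  then show ?thesis
    unfolding eventually_sequentially by blast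
qed

lemma ennreal_eq_0_if_of_nat_mult_bounded:
  fixes x C :: ennreal
  assumes bounded: "\<And>n::nat. of_nat n * x \<le> C" and "C < \<infinity>"
  shows "x = 0"
proof (rule ccontr)
  assume "x \<noteq> 0"
  have "x < \<infinity>"
    using bounded[of 1] \<open>C < \<infinity>\<close> by simp
  have "C / x < top"
    using \<open>C < \<infinity>\<close> \<open>x \<noteq> 0\<close> by (simp add: ennreal_divide_eq_top_iff flip: less_top)
  then obtain n :: nat where "C / x < of_nat n"
    using ennreal_Ex_less_of_nat[OF \<open>C / x < top\<close>] by blast
  then have "C < of_nat n * x"
    using \<open>x \<noteq> 0\<close> \<open>x < \<infinity>\<close> by (simp add: divide_less_ennreal)
  then show False
    using bounded[of n] by simp
qed

lemma emeasure_liminf_le_SUP: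
  fixes U :: "nat \<Rightarrow> 'a set"
  assumes "\<And>m. U m \<in> sets M"
  shows "emeasure M (\<Union>m. \<Inter>m'\<in>{m..}. U m') \<le> (SUP m. emeasure M (U m))"
proof -
  have "(SUP m. emeasure M (\<Inter>m'\<in>{m..}. U m')) = emeasure M (\<Union>m. \<Inter>m'\<in>{m..}. U m')"
    by (rule SUP_emeasure_incseq) (use assms in \<open>auto simp: incseq_def\<close>)
  then have "emeasure M (\<Union>m. \<Inter>m'\<in>{m..}. U m') = (SUP m. emeasure M (\<Inter>m'\<in>{m..}. U m'))"
    by simp
  also have "\<dots> \<le> (SUP m. emeasure M (U m))"
    using assms by (intro SUP_mono) (auto intro!: emeasure_mono)
  finally show ?thesis .
qed

lemma liminf_null_if_of_nat_mult_bounded: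
  fixes U :: "nat \<Rightarrow> nat \<Rightarrow> 'a set"
  assumes sets_U: "\<And>K m. U K m \<in> sets M"
    and bounded: "\<And>K m. of_nat K * emeasure M (U K m) \<le> C" and "C < \<infinity>"
  shows "(\<Inter>K. \<Union>m. \<Inter>m'\<in>{m..}. U K m') \<in> null_sets M"
proof -
  let ?L = "\<Inter>K. \<Union>m. \<Inter>m'\<in>{m..}. U K m'"
  have "?L \<in> sets M"
    using sets_U by auto
  moreover have "of_nat K * emeasure M ?L \<le> C" for K
  proof -
    have "emeasure M ?L \<le> emeasure M (\<Union>m. \<Inter>m'\<in>{m..}. U K m')"
      using sets_U by (intro emeasure_mono) auto
    also have "\<dots> \<le> (SUP m. emeasure M (U K m))"
      using sets_U by (rule emeasure_liminf_le_SUP)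
    finally have "of_nat K * emeasure M ?L \<le> of_nat K * (SUP m. emeasure M (U K m))"
      by (rule mult_left_mono) simp
    also have "\<dots> = (SUP m. of_nat K * emeasure M (U K m))"
      by (rule SUP_mult_left_ennreal)
    also have "\<dots> \<le> C"
      using bounded by (rule SUP_least)
    finally show ?thesis .
  qed
  then have "emeasure M ?L = 0"
    using \<open>C < \<infinity>\<close> by (rule ennreal_eq_0_if_of_nat_mult_bounded)
  ultimately show ?thesis
    by (simp add: null_sets_def)
qed

lemma exceeding_ratio_cover_estimate:
  fixes M \<nu> :: "'a::euclidean_space measure"
  assumes sets_M: "sets M = sets borel" and sets_\<nu>: "sets \<nu> = sets borel"
    and overlap: "\<And>(S :: 'a set) \<rho> z. isolated_centers \<rho> S \<Longrightarrow> card {x\<in>S. z \<in> ball x (\<rho> x)} \<le> N"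
    and radii: "finite (\<rho> ` A)" "\<rho> ` A \<subseteq> {0<..1}" and "A \<subseteq> ball c R"
    and exceeds: "\<And>x. x \<in> A \<Longrightarrow> of_nat K * emeasure M (ball x (\<rho> x)) < emeasure \<nu> (ball x (\<rho> x))"
  shows "\<exists>U\<in>sets M. A \<subseteq> U \<and> of_nat K * emeasure M U \<le> of_nat N * emeasure \<nu> (ball c (R + 1))"
proof -
  have "bounded A"
    using \<open>A \<subseteq> ball c R\<close> bounded_ball bounded_subset by blast
  moreover have "\<rho> ` A \<subseteq> {0<..}"
    using radii(2) by auto
  ultimately obtain S where S: "finite S" "S \<subseteq> A" "A \<subseteq> (\<Union>x\<in>S. ball x (\<rho> x))"
    "isolated_centers \<rho> S"
    using radii(1) by (metis finite_radii_isolated_subcover)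
  define U where "U = (\<Union>x\<in>S. ball x (\<rho> x))"
  have "U \<subseteq> ball c (R + 1)"
  proof
    fix z assume "z \<in> U"
    then obtain x where x: "x \<in> S" "dist x z < \<rho> x"
      by (auto simp: U_def)
    then have "x \<in> A"
      using S(2) by blast
    then have "dist c x < R" "\<rho> x \<le> 1"
      using \<open>A \<subseteq> ball c R\<close> radii(2) by (auto simp: image_subset_iff)
    with x(2) show "z \<in> ball c (R + 1)"
      using dist_triangle[of c z x] by simp
  qed
  have "of_nat K * emeasure M U \<le> of_nat K * (\<Sum>x\<in>S. emeasure M (ball x (\<rho> x)))"
    unfolding U_def
    by (intro mult_left_mono emeasure_subadditive_finite) (auto simp: S(1) sets_M)
  also have "\<dots> = (\<Sum>x\<in>S. of_nat K * emeasure M (ball x (\<rho> x)))"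
    by (simp add: sum_distrib_left)
  also have "\<dots> \<le> (\<Sum>x\<in>S. emeasure \<nu> (ball x (\<rho> x)))"
    by (intro sum_mono less_imp_le) (use S(2) exceeds in blast)
  also have "\<dots> \<le> of_nat N * emeasure \<nu> U"
    unfolding U_def
    by (intro sum_emeasure_le_of_bounded_overlap)
      (simp_all add: S(1) sets_\<nu> overlap[OF S(4)] del: mem_ball)
  also have "\<dots> \<le> of_nat N * emeasure \<nu> (ball c (R + 1))"
    by (intro mult_left_mono emeasure_mono) (auto simp: \<open>U \<subseteq> ball c (R + 1)\<close> sets_\<nu>)
  finally have "of_nat K * emeasure M U \<le> of_nat N * emeasure \<nu> (ball c (R + 1))" .
  moreover have "U \<in> sets M"
    unfolding U_def by (auto simp: S(1) sets_M)
  ultimately show ?thesis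
    using S(3) U_def by blast
qed

lemma eventually_exceeding_ratio_on_radius_grid:
  fixes x :: "'a::metric_space"
  assumes sets_M: "sets M = sets borel" and sets_\<nu>: "sets \<nu> = sets borel"
    and "r \<le> 1" and exceeds: "c * emeasure M (ball x r) < emeasure \<nu> (ball x r)"
  shows "eventually (\<lambda>m. \<exists>s\<in>radius_grid m. c * emeasure M (ball x s) < emeasure \<nu> (ball x s))
           sequentially"
proof -
  obtain r' where "0 < r'" "r' < r" and r': "c * emeasure M (ball x r) < emeasure \<nu> (ball x r')"
    using sets_\<nu> exceeds by (rule less_emeasure_ball_imp_less_smaller_ball)
  have "c * emeasure M (ball x s) < emeasure \<nu> (ball x s)" if "r' \<le> s" "s \<le> r" for s
  proof -
    have "c * emeasure M (ball x s) \<le> c * emeasure M (ball x r)"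
      by (intro mult_left_mono emeasure_mono subset_ball) (auto simp: that sets_M)
    also note r'
    also have "emeasure \<nu> (ball x r') \<le> emeasure \<nu> (ball x s)"
      by (intro emeasure_mono subset_ball) (auto simp: that sets_\<nu>)
    finally show ?thesis .
  qed
  with eventually_radius_grid_between[OF \<open>0 < r'\<close> \<open>r' < r\<close> \<open>r \<le> 1\<close>] show ?thesis
    by (auto elim!: eventually_mono)
qed

lemma liminf_subset_null_if_covered:
  fixes A :: "nat \<Rightarrow> nat \<Rightarrow> 'a set"
  assumes cover: "\<And>K m. \<exists>U\<in>sets M. A K m \<subseteq> U \<and> of_nat K * emeasure M U \<le> C"
    and "C < \<infinity>"
  shows "\<exists>W\<in>null_sets M. (\<Inter>K. \<Union>m. \<Inter>m'\<in>{m..}. A K m') \<subseteq> W"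
proof -
  define U where "U K m = (SOME U. U \<in> sets M \<and> A K m \<subseteq> U \<and> of_nat K * emeasure M U \<le> C)"
    for K m
  have U: "U K m \<in> sets M" "A K m \<subseteq> U K m" "of_nat K * emeasure M (U K m) \<le> C" for K m
    using someI_ex[OF cover[of K m, unfolded Bex_def]] unfolding U_def[symmetric] by simp_all
  have "(\<Inter>K. \<Union>m. \<Inter>m'\<in>{m..}. U K m') \<in> null_sets M"
    using U(1,3) \<open>C < \<infinity>\<close> by (rule liminf_null_if_of_nat_mult_bounded)
  moreover have "(\<Inter>K. \<Union>m. \<Inter>m'\<in>{m..}. A K m') \<subseteq> (\<Inter>K. \<Union>m. \<Inter>m'\<in>{m..}. U K m')"
    by (intro INT_anti_mono UN_mono order_refl) (use U(2) in blast)
  ultimately show ?thesis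
    by blast
qed

lemma null_if_ratio_unbounded_at_small_scales:
  fixes M \<nu> :: "'a::euclidean_space measure"
  assumes sets_M: "sets M = sets borel" and sets_\<nu>: "sets \<nu> = sets borel"
    and \<nu>_ball_finite: "\<And>x r. emeasure \<nu> (ball x r) < \<infinity>"
    and unbounded: "\<And>x K. x \<in> Z \<Longrightarrow>
      \<exists>r. 0 < r \<and> r < 1 \<and> of_nat K * emeasure M (ball x r) < emeasure \<nu> (ball x r)"
  shows "\<exists>W\<in>null_sets M. Z \<subseteq> W"
proof -
  obtain N where overlap:
    "\<And>(S :: 'a set) \<rho> z. isolated_centers \<rho> S \<Longrightarrow> card {x\<in>S. z \<in> ball x (\<rho> x)} \<le> N"
    using isolated_centers_bounded_overlap[where 'a='a] by blast
  define A where "A R K m = {x \<in> ball 0 (real R). \<exists>s\<in>radius_grid m.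
      of_nat K * emeasure M (ball x s) < emeasure \<nu> (ball x s)}" for R K m :: nat
  txt \<open>The sets \<open>A R K m\<close> need not be measurable, hence the passage to measurable covers.\<close>
  have "\<exists>W\<in>null_sets M. (\<Inter>K. \<Union>m. \<Inter>m'\<in>{m..}. A R K m') \<subseteq> W" for R
  proof (rule liminf_subset_null_if_covered)
    show "of_nat N * emeasure \<nu> (ball 0 (real R + 1)) < \<infinity>"
      using \<nu>_ball_finite by (simp add: ennreal_mult_less_top of_nat_less_top)
    fix K m
    have "\<forall>x\<in>A R K m. \<exists>s. s \<in> radius_grid m \<and>
        of_nat K * emeasure M (ball x s) < emeasure \<nu> (ball x s)"
      by (auto simp: A_def)
    then obtain \<rho> where \<rho>: "\<forall>x\<in>A R K m. \<rho> x \<in> radius_grid m \<and>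
        of_nat K * emeasure M (ball x (\<rho> x)) < emeasure \<nu> (ball x (\<rho> x))"
      by (auto dest!: bchoice)
    then have "\<rho> ` A R K m \<subseteq> radius_grid m"
      by blast
    then have "finite (\<rho> ` A R K m)" "\<rho> ` A R K m \<subseteq> {0<..1}"
      using finite_radius_grid radius_grid_subset by (blast intro: finite_subset)+
    moreover have "A R K m \<subseteq> ball 0 (real R)"
      by (auto simp: A_def)
    ultimately show "\<exists>U\<in>sets M. A R K m \<subseteq> U \<and>
        of_nat K * emeasure M U \<le> of_nat N * emeasure \<nu> (ball 0 (real R + 1))"
      using \<rho> by (intro exceeding_ratio_cover_estimate[OF sets_M sets_\<nu> overlap]) auto
  qed
  then obtain W where W: "\<And>R. W R \<in> null_sets M"
    "\<And>R. (\<Inter>K. \<Union>m. \<Inter>m'\<in>{m..}. A R K m') \<subseteq> W R"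
    by metis
  have "Z \<subseteq> (\<Union>R. W R)"
  proof
    fix x assume "x \<in> Z"
    define R where "R = nat \<lceil>norm x\<rceil> + 1"
    have "x \<in> ball 0 (real R)"
      by (simp add: R_def) linarith
    have "\<exists>m. \<forall>m'\<in>{m..}. x \<in> A R K m'" for K
    proof -
      obtain r where "0 < r" "r < 1"
        and exceeds: "of_nat K * emeasure M (ball x r) < emeasure \<nu> (ball x r)"
        using unbounded[OF \<open>x \<in> Z\<close>] by blast
      have "eventually (\<lambda>m. x \<in> A R K m) sequentially"
        using eventually_exceeding_ratio_on_radius_grid[OF sets_M sets_\<nu> _ exceeds] \<open>r < 1\<close>
          \<open>x \<in> ball 0 (real R)\<close>
        by (auto simp: A_def elim!: eventually_mono)
      then show ?thesis
        unfolding eventually_sequentially by blast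
    qed
    then have "x \<in> (\<Inter>K. \<Union>m. \<Inter>m'\<in>{m..}. A R K m')"
      by simp
    then have "x \<in> W R"
      by (rule subsetD[OF W(2)])
    then show "x \<in> (\<Union>R. W R)"
      by blast
  qed
  moreover have "(\<Union>R. W R) \<in> null_sets M"
    using W(1) by (rule null_sets_UN)
  ultimately show ?thesis
    by blast
qed

section \<open>Large balls and the growth condition\<close>

lemma emeasure_ball_iterated_growth:
  fixes M :: "'a::metric_space measure"
  assumes ball_pos: "\<And>x r. r > 0 \<Longrightarrow> 0 < emeasure M (ball x r)"
    and ball_finite: "\<And>x r. emeasure M (ball x r) < \<infinity>"
    and growth:
      "Limsup at_top (\<lambda>r. ereal (measure M (ball y0 (r + 1)) / measure M (ball y0 r))) < \<infinity>"
  shows "\<exists>c s0. \<forall>n s. s \<ge> s0 \<longrightarrow>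
    emeasure M (ball y0 (s + real n)) \<le> ennreal (c ^ n) * emeasure M (ball y0 s)"
proof -
  have "Limsup at_top (\<lambda>r. ereal (measure M (ball y0 (r + 1)) / measure M (ball y0 r))) \<noteq> \<infinity>"
    using growth by simp
  then obtain c0 :: nat where
    "Limsup at_top (\<lambda>r. ereal (measure M (ball y0 (r + 1)) / measure M (ball y0 r))) < ereal c0"
    unfolding less_PInf_Ex_of_nat by blast
  then have "eventually (\<lambda>r. ereal (measure M (ball y0 (r + 1)) / measure M (ball y0 r)) < ereal c0)
      at_top"
    by (rule Limsup_lessD)
  then obtain s1 where s1: "\<And>s. s \<ge> s1 \<Longrightarrow> measure M (ball y0 (s + 1)) / measure M (ball y0 s) < c0"
    unfolding eventually_at_top_linorder by auto
  define c where "c = real c0"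
  define s0 where "s0 = max s1 1"
  have emeasure_eq: "emeasure M (ball x r) = ennreal (measure M (ball x r))" for x r
    using ball_finite[of x r] by (intro emeasure_eq_ennreal_measure) simp
  have step: "emeasure M (ball y0 (s + 1)) \<le> ennreal c * emeasure M (ball y0 s)" if "s \<ge> s0" for s
  proof -
    have "0 < measure M (ball y0 s)"
      using ball_pos[of s y0] that emeasure_eq[of y0 s] by (simp add: s0_def)
    then have "measure M (ball y0 (s + 1)) \<le> c * measure M (ball y0 s)"
      using s1[of s] that by (simp add: s0_def c_def divide_less_eq)
    then show ?thesis
      by (simp add: emeasure_eq c_def ennreal_mult[symmetric] ennreal_leI)
  qed
  have "emeasure M (ball y0 (s + real n)) \<le> ennreal (c ^ n) * emeasure M (ball y0 s)"
    if "s \<ge> s0" for n s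
  proof (induction n)
    case (Suc n)
    have "emeasure M (ball y0 (s + real (Suc n))) \<le> ennreal c * emeasure M (ball y0 (s + real n))"
      using step[of "s + real n"] that by (simp add: add_ac)
    also have "\<dots> \<le> ennreal c * (ennreal (c ^ n) * emeasure M (ball y0 s))"
      using Suc.IH by (rule mult_left_mono) simp
    finally show ?case
      by (simp add: c_def ennreal_mult mult.assoc)
  qed simp
  then show ?thesis
    by blast
qed

lemma ball_subset_ball_dist:
  fixes a b :: "'a::metric_space"
  shows "ball a r \<subseteq> ball b (r + dist a b)"
proof
  fix z assume "z \<in> ball a r"
  then show "z \<in> ball b (r + dist a b)"
    using dist_triangle[of b z a] by (simp add: dist_commute)
qed

lemma emeasure_ball_large_scale_comparable:
  fixes M :: "'a::metric_space measure"
  assumes sets_M: "sets M = sets borel"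
    and ball_pos: "\<And>x r. r > 0 \<Longrightarrow> 0 < emeasure M (ball x r)"
    and ball_finite: "\<And>x r. emeasure M (ball x r) < \<infinity>"
    and growth:
      "Limsup at_top (\<lambda>r. ereal (measure M (ball y0 (r + 1)) / measure M (ball y0 r))) < \<infinity>"
  shows "\<exists>C<\<infinity>. \<exists>r1. \<forall>r\<ge>r1. emeasure M (ball a (r + dist a b)) \<le> C * emeasure M (ball b r)"
proof -
  obtain c s0 where iterate:
    "\<And>n s. s \<ge> s0 \<Longrightarrow> emeasure M (ball y0 (s + real n)) \<le> ennreal (c ^ n) * emeasure M (ball y0 s)"
    using emeasure_ball_iterated_growth[OF ball_pos ball_finite growth] by blast
  define n where "n = nat \<lceil>dist a b + dist a y0 + dist b y0\<rceil>"
  have "emeasure M (ball a (r + dist a b)) \<le> ennreal (c ^ n) * emeasure M (ball b r)"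
    if "r \<ge> s0 + dist b y0" for r
  proof -
    have "dist a b + dist a y0 + dist b y0 \<le> real n"
      unfolding n_def by linarith
    then have "ball a (r + dist a b) \<subseteq> ball y0 ((r - dist b y0) + real n)"
      using ball_subset_ball_dist[of a "r + dist a b" y0] by (auto simp: dist_commute)
    then have "emeasure M (ball a (r + dist a b)) \<le> emeasure M (ball y0 ((r - dist b y0) + real n))"
      by (rule emeasure_mono) (simp add: sets_M)
    also have "\<dots> \<le> ennreal (c ^ n) * emeasure M (ball y0 (r - dist b y0))"
      using that by (intro iterate) simp
    also have "\<dots> \<le> ennreal (c ^ n) * emeasure M (ball b r)"
      using ball_subset_ball_dist[of y0 "r - dist b y0" b]
      by (intro mult_left_mono emeasure_mono) (auto simp: sets_M dist_commute)
    finally show ?thesis .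
  qed
  moreover have "ennreal (c ^ n) < \<infinity>"
    by simp
  ultimately show ?thesis
    by blast
qed

lemma le_mult_if_divide_le_ennreal:
  fixes a b c :: ennreal
  assumes "a / b \<le> c" "b \<noteq> 0" "b < \<infinity>"
  shows "a \<le> c * b"
proof -
  have "a = a / b * b"
    using assms(2,3) by (simp add: ennreal_divide_times ennreal_times_divide mult_divide_eq_ennreal)
  also have "\<dots> \<le> c * b"
    using assms(1) by (rule mult_right_mono) simp
  finally show ?thesis .
qed

lemma ratio_bounded_at_large_scales:
  fixes M \<nu> :: "'a::metric_space measure"
  assumes sets_M: "sets M = sets borel" and sets_\<nu>: "sets \<nu> = sets borel"
    and ball_pos: "\<And>x r. r > 0 \<Longrightarrow> 0 < emeasure M (ball x r)"
    and ball_finite: "\<And>x r. emeasure M (ball x r) < \<infinity>"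
    and growth:
      "Limsup at_top (\<lambda>r. ereal (measure M (ball y0 (r + 1)) / measure M (ball y0 r))) < \<infinity>"
    and \<nu>_ball_finite: "\<And>x r. emeasure \<nu> (ball x r) < \<infinity>"
    and bounded_at_x0: "\<And>r. r > 0 \<Longrightarrow> emeasure \<nu> (ball x0 r) \<le> L * emeasure M (ball x0 r)"
    and "L < \<infinity>"
  shows "\<exists>B<\<infinity>. \<forall>r\<ge>1. emeasure \<nu> (ball x r) \<le> B * emeasure M (ball x r)"
proof -
  obtain C r1 where "C < \<infinity>"
    and comparable: "\<And>r. r \<ge> r1 \<Longrightarrow> emeasure M (ball x0 (r + dist x0 x)) \<le> C * emeasure M (ball x r)"
    using emeasure_ball_large_scale_comparable[OF sets_M ball_pos ball_finite growth] by blast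
  define r2 where "r2 = max r1 1"
  define B where "B = max (L * C) (emeasure \<nu> (ball x r2) / emeasure M (ball x 1))"
  have M_ball_1: "emeasure M (ball x 1) \<noteq> 0" "emeasure M (ball x 1) < \<infinity>"
    using ball_pos[of 1 x] ball_finite[of x 1] by auto
  have "L * C < \<infinity>"
    using \<open>L < \<infinity>\<close> \<open>C < \<infinity>\<close> by (simp add: ennreal_mult_less_top)
  moreover have "emeasure \<nu> (ball x r2) / emeasure M (ball x 1) < \<infinity>"
    using \<nu>_ball_finite[of x r2] M_ball_1 by (simp add: ennreal_divide_eq_top_iff flip: less_top)
  ultimately have "B < \<infinity>"
    by (simp add: B_def)
  moreover have "emeasure \<nu> (ball x r) \<le> B * emeasure M (ball x r)" if "r \<ge> 1" for r
  proof (cases "r \<ge> r2")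
    case True
    have "emeasure \<nu> (ball x r) \<le> emeasure \<nu> (ball x0 (r + dist x0 x))"
      using ball_subset_ball_dist[of x r x0]
      by (intro emeasure_mono) (auto simp: sets_\<nu> dist_commute)
    also have "\<dots> \<le> L * emeasure M (ball x0 (r + dist x0 x))"
      by (intro bounded_at_x0) (use that zero_le_dist[of x0 x] in linarith)
    also have "\<dots> \<le> L * (C * emeasure M (ball x r))"
      using True by (intro mult_left_mono comparable) (auto simp: r2_def)
    also have "\<dots> \<le> B * emeasure M (ball x r)"
      by (simp add: B_def mult.assoc[symmetric] mult_right_mono)
    finally show ?thesis .
  next
    case False
    have "emeasure \<nu> (ball x r) \<le> emeasure \<nu> (ball x r2)"
      using False by (intro emeasure_mono subset_ball) (auto simp: sets_\<nu>)
    also have "\<dots> \<le> emeasure \<nu> (ball x r2) / emeasure M (ball x 1) * emeasure M (ball x 1)"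
      using M_ball_1 by (intro le_mult_if_divide_le_ennreal) simp_all
    also have "\<dots> \<le> B * emeasure M (ball x r)"
      using that by (intro mult_mono emeasure_mono subset_ball) (auto simp: B_def sets_M)
    finally show ?thesis .
  qed
  ultimately show ?thesis
    by blast
qed

section \<open>The centred maximal function of a measure\<close>

definition centered_max_measure :: "'a::metric_space measure \<Rightarrow> 'a measure \<Rightarrow> 'a \<Rightarrow> ennreal" where
  "centered_max_measure M \<nu> x = (SUP r\<in>{0<..}. emeasure \<nu> (ball x r) / emeasure M (ball x r))"

lemma centered_max_eq_centered_max_measure_density:
  assumes "sets M = sets borel" "f \<in> borel_measurable M"
  shows "centered_max M f x = centered_max_measure M (density M (\<lambda>y. ennreal \<bar>f y\<bar>)) x"
  using assms by (simp add: centered_max_def centered_max_measure_def emeasure_density)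

lemma emeasure_ball_le_centered_max_measure:
  assumes "r > 0" "0 < emeasure M (ball x r)" "emeasure M (ball x r) < \<infinity>"
  shows "emeasure \<nu> (ball x r) \<le> centered_max_measure M \<nu> x * emeasure M (ball x r)"
  using assms unfolding centered_max_measure_def
  by (intro le_mult_if_divide_le_ennreal) (auto intro: SUP_upper)

lemma exceeding_ratio_at_small_scale:
  fixes M \<nu> :: "'a::metric_space measure"
  assumes unbounded: "centered_max_measure M \<nu> x = \<infinity>"
    and ball_pos: "\<And>r. r > 0 \<Longrightarrow> 0 < emeasure M (ball x r)"
    and "B < \<infinity>" and large: "\<And>r. r \<ge> 1 \<Longrightarrow> emeasure \<nu> (ball x r) \<le> B * emeasure M (ball x r)"
  shows "\<exists>r. 0 < r \<and> r < 1 \<and> of_nat K * emeasure M (ball x r) < emeasure \<nu> (ball x r)"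
proof (rule ccontr)
  assume "\<not> ?thesis"
  then have small: "emeasure \<nu> (ball x r) \<le> of_nat K * emeasure M (ball x r)"
    if "0 < r" "r < 1" for r
    using that by (meson not_less)
  define T where "T = max (of_nat K) B"
  have "emeasure \<nu> (ball x r) \<le> T * emeasure M (ball x r)" if "r > 0" for r
  proof (cases "r < 1")
    case True
    then have "emeasure \<nu> (ball x r) \<le> of_nat K * emeasure M (ball x r)"
      using small that by blast
    also have "\<dots> \<le> T * emeasure M (ball x r)"
      by (intro mult_right_mono) (simp_all add: T_def)
    finally show ?thesis .
  next
    case False
    then have "emeasure \<nu> (ball x r) \<le> B * emeasure M (ball x r)"
      using large by simp
    also have "\<dots> \<le> T * emeasure M (ball x r)"
      by (intro mult_right_mono) (simp_all add: T_def)
    finally show ?thesis .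
  qed
  then have "emeasure \<nu> (ball x r) / emeasure M (ball x r) \<le> T" if "r > 0" for r
    using ball_pos[OF that] that by (simp add: divide_le_posI_ennreal mult.commute)
  then have "centered_max_measure M \<nu> x \<le> T"
    unfolding centered_max_measure_def by (intro SUP_least) simp
  moreover have "T < \<infinity>"
    using \<open>B < \<infinity>\<close> by (simp add: T_def of_nat_less_top)
  ultimately show False
    using unbounded by simp
qed

lemma centered_max_measure_dichotomy:
  fixes M \<nu> :: "'a::euclidean_space measure"
  assumes sets_M: "sets M = sets borel" and sets_\<nu>: "sets \<nu> = sets borel"
    and ball_pos: "\<And>x r. r > 0 \<Longrightarrow> 0 < emeasure M (ball x r)"
    and ball_finite: "\<And>x r. emeasure M (ball x r) < \<infinity>"
    and growth:
      "Limsup at_top (\<lambda>r. ereal (measure M (ball y0 (r + 1)) / measure M (ball y0 r))) < \<infinity>"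
    and \<nu>_ball_finite: "\<And>x r. emeasure \<nu> (ball x r) < \<infinity>"
  shows "emeasure M {x. centered_max_measure M \<nu> x = \<infinity>} = 0 \<or> (\<forall>x. centered_max_measure M \<nu> x = \<infinity>)"
proof (cases "\<forall>x. centered_max_measure M \<nu> x = \<infinity>")
  case False
  then obtain x0 where "centered_max_measure M \<nu> x0 < \<infinity>"
    by (auto simp: less_top)
  have "\<exists>r. 0 < r \<and> r < 1 \<and> of_nat K * emeasure M (ball x r) < emeasure \<nu> (ball x r)"
    if "x \<in> {x. centered_max_measure M \<nu> x = \<infinity>}" for x K
  proof -
    obtain B where "B < \<infinity>" "\<And>r. r \<ge> 1 \<Longrightarrow> emeasure \<nu> (ball x r) \<le> B * emeasure M (ball x r)"
      using ratio_bounded_at_large_scales[OF sets_M sets_\<nu> ball_pos ball_finite growth \<nu>_ball_finite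
          emeasure_ball_le_centered_max_measure \<open>centered_max_measure M \<nu> x0 < \<infinity>\<close>]
        ball_pos ball_finite by blast
    with that show ?thesis
      by (intro exceeding_ratio_at_small_scale[OF _ ball_pos]) simp_all
  qed
  then obtain W where "W \<in> null_sets M" "{x. centered_max_measure M \<nu> x = \<infinity>} \<subseteq> W"
    using null_if_ratio_unbounded_at_small_scales[OF sets_M sets_\<nu> \<nu>_ball_finite] by blast
  then have "emeasure M {x. centered_max_measure M \<nu> x = \<infinity>} \<le> emeasure M W"
    by (intro emeasure_mono) auto
  with \<open>W \<in> null_sets M\<close> show ?thesis
    by (simp add: null_setsD1)
qed simp

theorem proposition6p3p1:
  fixes M :: "'a::euclidean_space measure" and y0 :: 'a
  assumes borel: "sets M = sets borel"
    and ball_pos: "\<And>x r. r > 0 \<Longrightarrow> 0 < emeasure M (ball x r)"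
    and ball_fin: "\<And>x r. emeasure M (ball x r) < \<infinity>"
    and growth: "Limsup (at_top :: real filter)
              (\<lambda>r. ereal (measure M (ball y0 (r + 1)) / measure M (ball y0 r))) < \<infinity>"
  shows "dichotomy_centered M"
  unfolding dichotomy_centered_def
proof
  fix f assume "f \<in> L1_loc M"
  then have f_meas: "f \<in> borel_measurable M"
    and f_int: "\<And>x r. (\<integral>\<^sup>+ y\<in>ball x r. ennreal \<bar>f y\<bar> \<partial>M) < \<infinity>"
    unfolding L1_loc_def by auto
  define \<nu> where "\<nu> = density M (\<lambda>y. ennreal \<bar>f y\<bar>)"
  have "sets \<nu> = sets borel"
    using borel by (simp add: \<nu>_def)
  moreover have "emeasure \<nu> (ball x r) < \<infinity>" for x r
    using f_meas f_int borel by (simp add: \<nu>_def emeasure_density)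
  ultimately show "emeasure M {x. centered_max M f x = \<infinity>} = 0 \<or> (\<forall>x. centered_max M f x = \<infinity>)"
    using centered_max_measure_dichotomy[OF borel _ ball_pos ball_fin growth]
    by (simp add: centered_max_eq_centered_max_measure_density[OF borel f_meas] \<nu>_def)
qed

end
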